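(* Let $\mathcal{C}$ be a component of class $i$ (at an upper layer $l$) which has at least $m$ pairwise internally vertex-disjoint long connector paths, where $m=\Omega(k)$. Then every maximal matching in $\mathcal{H}_i[\mathcal{C}]$ has cardinality $\Omega(k)$ (namely at least $m/2$).
   Context: $G=(V,E)$ is a finite undirected graph with vertex connectivity $k$. Fix an integer $L$. The virtual graph $\mathcal{G}$ contains $3L$ copies of each $v\in V$: each lower layer $1,\dots,L$ contains one copy of every node; each upper layer $L+1,\dots,2L$ contains a type-1 copy and a type-2 copy of every node. Every copy of $v$ is adjacent to all other copies of $v$ and to all copies of each neighbor of $v$ in $G$. $\Psi$ maps virtual nodes to real nodes. There are classes $1,\dots,t$. For a fixed upper layer $l$, nodes of layers $1,\dots,l-1$ are old nodes, each assigned a class; a component of class $i$ is a connected component of the subgraph induced by old nodes of class $i$. A long connector path for $\mathcal{C}$ is a path $(s,v,w,u)$ with $s\in\mathcal{C}$, $u$ in a component $\mathcal{C}'\neq\mathcal{C}$ of class $i$ with $\Psi(\mathcal{C})\cap\Psi(\mathcal{C}')=\emptyset$, $v$ a type-2 and $w$ a type-1 node of layer $l$, $v$ having no neighbor in any component of class $i$ other than $\mathcal{C}$ and $w$ having no neighbor in $\mathcal{C}$; its internal vertices are $v,w$, and paths are internally vertex-disjoint if their sets of internal vertices are pairwise disjoint. The helper graph $\mathcal{H}_i[\mathcal{C}]$: for each type-2 node $v$ of layer $l$, a node $v_{\mathcal{C}}$ is added iff $\Psi(v)\notin\Psi(\mathcal{C})$, $v$ has a neighbor in $\mathcal{C}$,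 and $v$ has no neighbor in another component of class $i$; for each such $v_{\mathcal{C}}$ and each type-1 neighbor $w$ of $v$ on layer $l$ that has a neighbor in some component $\mathcal{C}'\neq\mathcal{C}$ of class $i$ but no neighbor in $\mathcal{C}$, a node $w_{\mathcal{C}}$ and the edge $\{v_{\mathcal{C}},w_{\mathcal{C}}\}$ are added. *)

theory Defs
  imports Main
begin

(* Virtual nodes: Low j v  = copy of v on lower layer j (1..L);
   Up1 j v / Up2 j v = type-1 / type-2 copy of v on upper layer j (L+1..2L). *)
datatype 'a vnode = Low nat 'a | Up1 nat 'a | Up2 nat 'a

fun Psi :: "'a vnode \<Rightarrow> 'a" where
  "Psi (Low j a) = a" | "Psi (Up1 j a) = a" | "Psi (Up2 j a) = a"

fun layer :: "'a vnode \<Rightarrow> nat" where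
  "layer (Low j a) = j" | "layer (Up1 j a) = j" | "layer (Up2 j a) = j"

definition vnodes :: "'a set \<Rightarrow> nat \<Rightarrow> 'a vnode set" where
  "vnodes V L =
     {Low j a | j a. 1 \<le> j \<and> j \<le> L \<and> a \<in> V}
   \<union> {Up1 j a | j a. L < j \<and> j \<le> 2 * L \<and> a \<in> V}
   \<union> {Up2 j a | j a. L < j \<and> j \<le> 2 * L \<and> a \<in> V}"

definition vadj :: "'a set \<Rightarrow> ('a \<Rightarrow> 'a \<Rightarrow> bool) \<Rightarrow> nat \<Rightarrow> 'a vnode \<Rightarrow> 'a vnode \<Rightarrow> bool" where
  "vadj V E L x y \<longleftrightarrow> x \<in> vnodes V L \<and> y \<in> vnodes V L \<and> x \<noteq> y \<and>
     (Psi x = Psi y \<or> E (Psi x) (Psi y))"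

definition old_class :: "'a set \<Rightarrow> nat \<Rightarrow> nat \<Rightarrow> ('a vnode \<Rightarrow> nat) \<Rightarrow> nat \<Rightarrow> 'a vnode set" where
  "old_class V L l cls i = {x \<in> vnodes V L. layer x < l \<and> cls x = i}"

definition class_component ::
  "'a set \<Rightarrow> ('a \<Rightarrow> 'a \<Rightarrow> bool) \<Rightarrow> nat \<Rightarrow> nat \<Rightarrow> ('a vnode \<Rightarrow> nat) \<Rightarrow> nat \<Rightarrow> 'a vnode set \<Rightarrow> bool" where
  "class_component V E L l cls i C \<longleftrightarrow>
     (\<exists>x \<in> old_class V L l cls i.
        C = {y. (\<lambda>a b. vadj V E L a b \<and> a \<in> old_class V L l cls i \<and> b \<in> old_class V L l cls i)\<^sup>*\<^sup>* x y})"

definition has_nbr_in :: "'a set \<Rightarrow> ('a \<Rightarrow> 'a \<Rightarrow> bool) \<Rightarrow> nat \<Rightarrow> 'a vnode \<Rightarrow> 'a vnode set \<Rightarrow> bool" where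
  "has_nbr_in V E L x C \<longleftrightarrow> (\<exists>y \<in> C. vadj V E L x y)"

definition is_type1 :: "nat \<Rightarrow> 'a vnode \<Rightarrow> bool" where
  "is_type1 l x \<longleftrightarrow> (\<exists>a. x = Up1 l a)"

definition is_type2 :: "nat \<Rightarrow> 'a vnode \<Rightarrow> bool" where
  "is_type2 l x \<longleftrightarrow> (\<exists>a. x = Up2 l a)"

definition long_connector ::
  "'a set \<Rightarrow> ('a \<Rightarrow> 'a \<Rightarrow> bool) \<Rightarrow> nat \<Rightarrow> nat \<Rightarrow> ('a vnode \<Rightarrow> nat) \<Rightarrow> nat \<Rightarrow> 'a vnode set
   \<Rightarrow> 'a vnode \<Rightarrow> 'a vnode \<Rightarrow> 'a vnode \<Rightarrow> 'a vnode \<Rightarrow> bool" where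
  "long_connector V E L l cls i C s v w u \<longleftrightarrow>
     s \<in> C \<and>
     (\<exists>C'. class_component V E L l cls i C' \<and> C' \<noteq> C \<and> u \<in> C' \<and> Psi ` C \<inter> Psi ` C' = {}) \<and>
     v \<in> vnodes V L \<and> is_type2 l v \<and> w \<in> vnodes V L \<and> is_type1 l w \<and>
     vadj V E L s v \<and> vadj V E L v w \<and> vadj V E L w u \<and>
     (\<forall>C'. class_component V E L l cls i C' \<and> C' \<noteq> C \<longrightarrow> \<not> has_nbr_in V E L v C') \<and>
     \<not> has_nbr_in V E L w C"

(* edges of the helper graph H_i[C]; an edge {v_C, w_C} is represented by the pair (v, w) *)
definition helper_edges ::
  "'a set \<Rightarrow> ('a \<Rightarrow> 'a \<Rightarrow> bool) \<Rightarrow> nat \<Rightarrow> nat \<Rightarrow> ('a vnode \<Rightarrow> nat) \<Rightarrow> nat \<Rightarrow> 'a vnode set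
   \<Rightarrow> ('a vnode \<times> 'a vnode) set" where
  "helper_edges V E L l cls i C =
     {(v, w). v \<in> vnodes V L \<and> is_type2 l v \<and> Psi v \<notin> Psi ` C \<and> has_nbr_in V E L v C \<and>
        (\<forall>C'. class_component V E L l cls i C' \<and> C' \<noteq> C \<longrightarrow> \<not> has_nbr_in V E L v C') \<and>
        w \<in> vnodes V L \<and> is_type1 l w \<and> vadj V E L v w \<and>
        (\<exists>C'. class_component V E L l cls i C' \<and> C' \<noteq> C \<and> has_nbr_in V E L w C') \<and>
        \<not> has_nbr_in V E L w C}"

(* matchings in a bipartite graph given by an edge set of pairs (left, right) *)
definition is_matching :: "('b \<times> 'b) set \<Rightarrow> ('b \<times> 'b) set \<Rightarrow> bool" where
  "is_matching H M \<longleftrightarrow> M \<subseteq> H \<and>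
     (\<forall>(a, b) \<in> M. \<forall>(c, d) \<in> M. (a, b) \<noteq> (c, d) \<longrightarrow> a \<noteq> c \<and> b \<noteq> d)"

definition is_maximal_matching :: "('b \<times> 'b) set \<Rightarrow> ('b \<times> 'b) set \<Rightarrow> bool" where
  "is_maximal_matching H M \<longleftrightarrow> is_matching H M \<and>
     (\<forall>e \<in> H. e \<notin> M \<longrightarrow> \<not> is_matching H (insert e M))"

end

theory Submission
  imports Defs
begin

text \<open>Each long connector path (s, v, w, u) contributes the helper edge (v, w), and internally
  disjoint paths contribute edges with pairwise distinct endpoints, i.e. a matching of size m.
  A maximal matching M meets every edge of the helper graph in an endpoint, and each edge of M
  can be met in this way by at most two edges of another matching, so m \<le> 2 |M|.\<close>

lemma maximal_matching_meets_edge: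
  assumes "is_maximal_matching H M" and "e \<in> H"
  shows "\<exists>e' \<in> M. fst e' = fst e \<or> snd e' = snd e"
proof (rule ccontr)
  assume no_common_endpoint: "\<not> ?thesis"
  then have "e \<notin> M" by blast
  have M: "M \<subseteq> H" "\<forall>(a, b) \<in> M. \<forall>(c, d) \<in> M. (a, b) \<noteq> (c, d) \<longrightarrow> a \<noteq> c \<and> b \<noteq> d"
    using assms(1) unfolding is_maximal_matching_def is_matching_def by auto
  have "is_matching H (insert e M)"
    unfolding is_matching_def
  proof (intro conjI)
    show "insert e M \<subseteq> H" using M(1) assms(2) by blast
    show "\<forall>(a, b) \<in> insert e M. \<forall>(c, d) \<in> insert e M. (a, b) \<noteq> (c, d) \<longrightarrow> a \<noteq> c \<and> b \<noteq> d"
      using M(2) no_common_endpoint by (cases e) fastforce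
  qed
  with \<open>e \<notin> M\<close> show False using assms unfolding is_maximal_matching_def by blast
qed

lemma card_edges_sharing_endpoint_le:
  assumes "is_matching H F" and "finite M"
    and "\<And>e. e \<in> F' \<Longrightarrow> \<exists>e' \<in> M. f e' = f e" and "F' \<subseteq> F"
    and f: "f = fst \<or> f = snd"
  shows "finite F' \<and> card F' \<le> card M"
proof -
  have "inj_on f F"
    using assms(1) f unfolding is_matching_def inj_on_def by fastforce
  then have inj: "inj_on f F'" using assms(4) inj_on_subset by blast
  have sub: "f ` F' \<subseteq> f ` M"
  proof
    fix y assume "y \<in> f ` F'"
    then obtain e where "e \<in> F'" "y = f e" by blast
    then obtain e' where "e' \<in> M" "f e' = y" using assms(3) by metis
    then show "y \<in> f ` M" by blast
  qed
  then have "finite F'" using inj assms(2) finite_imageD finite_subset by blast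
  moreover have "card F' \<le> card M"
    using card_image[OF inj] card_mono[OF finite_imageI[OF assms(2)] sub] card_image_le[OF assms(2), of f]
    by linarith
  ultimately show ?thesis ..
qed

lemma maximal_matching_card_ge:
  assumes max: "is_maximal_matching H M" and F: "is_matching H F" and "finite M"
  shows "card F \<le> 2 * card M"
proof -
  define F1 where "F1 = {e \<in> F. \<exists>e' \<in> M. fst e' = fst e}"
  define F2 where "F2 = {e \<in> F. \<exists>e' \<in> M. snd e' = snd e}"
  have "F \<subseteq> H" using F unfolding is_matching_def by blast
  then have cover: "F = F1 \<union> F2"
    using maximal_matching_meets_edge[OF max] unfolding F1_def F2_def by blast
  have F1: "finite F1 \<and> card F1 \<le> card M"
    by (rule card_edges_sharing_endpoint_le[OF F \<open>finite M\<close>, where f = fst]) (auto simp: F1_def)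
  have F2: "finite F2 \<and> card F2 \<le> card M"
    by (rule card_edges_sharing_endpoint_le[OF F \<open>finite M\<close>, where f = snd]) (auto simp: F2_def)
  have "card F \<le> card F1 + card F2" unfolding cover by (rule card_Un_le)
  with F1 F2 show ?thesis by linarith
qed

lemma internally_disjoint_paths_matching:
  fixes P :: "('b \<times> 'b \<times> 'b \<times> 'b) set"
  assumes edge: "\<And>s v w u. (s, v, w, u) \<in> P \<Longrightarrow> (v, w) \<in> H"
    and disjoint: "\<And>s v w u s' v' w' u'. (s, v, w, u) \<in> P \<Longrightarrow> (s', v', w', u') \<in> P \<Longrightarrow>
           (s, v, w, u) \<noteq> (s', v', w', u') \<Longrightarrow> {v, w} \<inter> {v', w'} = {}"
  shows "inj_on (\<lambda>(s, v, w, u). (v, w)) P \<and> is_matching H ((\<lambda>(s, v, w, u). (v, w)) ` P)"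
proof
  show "inj_on (\<lambda>(s, v, w, u). (v, w)) P"
  proof (rule inj_onI)
    fix p q assume "p \<in> P" "q \<in> P" "(\<lambda>(s, v, w, u). (v, w)) p = (\<lambda>(s, v, w, u). (v, w)) q"
    then show "p = q" using disjoint by (cases p, cases q) fastforce
  qed
  have "(\<lambda>(s, v, w, u). (v, w)) ` P \<subseteq> H" using edge by auto
  moreover have "a \<noteq> c \<and> b \<noteq> d"
    if "(a, b) \<in> (\<lambda>(s, v, w, u). (v, w)) ` P" "(c, d) \<in> (\<lambda>(s, v, w, u). (v, w)) ` P"
      "(a, b) \<noteq> (c, d)" for a b c d
    using that disjoint by fastforce
  ultimately show "is_matching H ((\<lambda>(s, v, w, u). (v, w)) ` P)"
    unfolding is_matching_def by blast
qed

lemma finite_vnodes: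
  assumes "finite V" shows "finite (vnodes V L)"
proof -
  have "vnodes V L \<subseteq> (\<lambda>(j, a). Low j a) ` ({..2*L} \<times> V) \<union> (\<lambda>(j, a). Up1 j a) ` ({..2*L} \<times> V)
          \<union> (\<lambda>(j, a). Up2 j a) ` ({..2*L} \<times> V)"
    unfolding vnodes_def by force
  then show ?thesis using assms by (meson finite_SigmaI finite_Un finite_atMost finite_imageI finite_subset)
qed

lemma finite_helper_edges:
  assumes "finite V" shows "finite (helper_edges V E L l cls i C)"
proof -
  have "helper_edges V E L l cls i C \<subseteq> vnodes V L \<times> vnodes V L"
    unfolding helper_edges_def by auto
  then show ?thesis using finite_vnodes[OF assms] by (meson finite_SigmaI finite_subset)
qed

lemma class_component_subset_old_class:
  assumes "class_component V E L l cls i C" shows "C \<subseteq> old_class V L l cls i"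
proof
  fix y assume "y \<in> C"
  from assms obtain x where x: "x \<in> old_class V L l cls i"
    and C: "C = {y. (\<lambda>a b. vadj V E L a b \<and> a \<in> old_class V L l cls i \<and> b \<in> old_class V L l cls i)\<^sup>*\<^sup>* x y}"
    unfolding class_component_def by blast
  from \<open>y \<in> C\<close> C
  have "(\<lambda>a b. vadj V E L a b \<and> a \<in> old_class V L l cls i \<and> b \<in> old_class V L l cls i)\<^sup>*\<^sup>* x y"
    by simp
  then show "y \<in> old_class V L l cls i"
    by (induction rule: rtranclp_induct) (use x in auto)
qed

lemma vadj_sym:
  assumes "\<And>x y. E x y \<Longrightarrow> E y x" and "vadj V E L x y" shows "vadj V E L y x"
  using assms unfolding vadj_def by auto

text \<open>The only helper-graph condition on v not read off directly from the path is that
  Psi v does not occur in Psi ` C: a copy c of Psi v in C lies on a lower layer than w, hence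
  differs from w and is adjacent to it, contradicting that w has no neighbour in C.\<close>

lemma long_connector_helper_edge:
  assumes E_sym: "\<And>x y. E x y \<Longrightarrow> E y x"
    and comp: "class_component V E L l cls i C"
    and lc: "long_connector V E L l cls i C s v w u"
  shows "(v, w) \<in> helper_edges V E L l cls i C"
proof -
  have path: "s \<in> C" "v \<in> vnodes V L" "is_type2 l v" "w \<in> vnodes V L" "is_type1 l w"
    "vadj V E L s v" "vadj V E L v w"
    "\<forall>C'. class_component V E L l cls i C' \<and> C' \<noteq> C \<longrightarrow> \<not> has_nbr_in V E L v C'"
    "\<not> has_nbr_in V E L w C"
    "\<exists>C'. class_component V E L l cls i C' \<and> C' \<noteq> C \<and> u \<in> C'"
    "vadj V E L w u"
    using lc unfolding long_connector_def by blast+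
  have "Psi v \<notin> Psi ` C"
  proof
    assume "Psi v \<in> Psi ` C"
    then obtain c where c: "c \<in> C" "Psi c = Psi v" by auto
    have "c \<in> vnodes V L" "layer c < l"
      using class_component_subset_old_class[OF comp] c(1) unfolding old_class_def by auto
    moreover have "layer w = l" using path(5) unfolding is_type1_def by auto
    ultimately have "vadj V E L w c"
      using path(7) c(2) E_sym unfolding vadj_def by auto
    then show False using path(9) c(1) unfolding has_nbr_in_def by blast
  qed
  moreover have "has_nbr_in V E L v C"
    using path(1,6) vadj_sym[of E, OF E_sym] unfolding has_nbr_in_def by blast
  moreover have "\<exists>C'. class_component V E L l cls i C' \<and> C' \<noteq> C \<and> has_nbr_in V E L w C'"
    using path(10,11) unfolding has_nbr_in_def by blast
  ultimately show ?thesis using path(2-5,7-9) unfolding helper_edges_def by simp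
qed

theorem lemma7:
  fixes V :: "'a set" and E :: "'a \<Rightarrow> 'a \<Rightarrow> bool"
    and L l t i m :: nat and cls :: "'a vnode \<Rightarrow> nat"
    and C :: "'a vnode set"
    and P :: "('a vnode \<times> 'a vnode \<times> 'a vnode \<times> 'a vnode) set"
    and M :: "('a vnode \<times> 'a vnode) set"
  assumes "finite V"
    and "\<And>x y. E x y \<Longrightarrow> x \<in> V \<and> y \<in> V"
    and "\<And>x y. E x y \<Longrightarrow> E y x"
    and "\<And>x. \<not> E x x"
    and "L < l" and "l \<le> 2 * L"
    and "1 \<le> i" and "i \<le> t"
    and "\<And>x. x \<in> vnodes V L \<Longrightarrow> layer x < l \<Longrightarrow> cls x \<in> {1..t}"
    and "class_component V E L l cls i C"
    and "finite P" and "m \<le> card P"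
    and "\<And>s v w u. (s, v, w, u) \<in> P \<Longrightarrow> long_connector V E L l cls i C s v w u"
    and "\<And>s v w u s' v' w' u'. (s, v, w, u) \<in> P \<Longrightarrow> (s', v', w', u') \<in> P \<Longrightarrow>
           (s, v, w, u) \<noteq> (s', v', w', u') \<Longrightarrow> {v, w} \<inter> {v', w'} = {}"
    and "is_maximal_matching (helper_edges V E L l cls i C) M"
  shows "m \<le> 2 * card M"
proof -
  let ?H = "helper_edges V E L l cls i C"
  let ?edge = "\<lambda>(s, v, w, u). (v, w)"
  have "\<And>s v w u. (s, v, w, u) \<in> P \<Longrightarrow> (v, w) \<in> ?H"
    using long_connector_helper_edge[OF assms(3,10) assms(13)] .
  then have edges: "inj_on ?edge P \<and> is_matching ?H (?edge ` P)"
    using internally_disjoint_paths_matching assms(14) by blast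
  have "M \<subseteq> ?H" using assms(15) unfolding is_maximal_matching_def is_matching_def by blast
  then have "finite M" using finite_helper_edges[OF assms(1)] by (rule finite_subset)
  have "card P = card (?edge ` P)" using edges card_image by metis
  also have "\<dots> \<le> 2 * card M"
    using maximal_matching_card_ge[OF assms(15)] edges \<open>finite M\<close> by blast
  finally show ?thesis using assms(12) by linarith
qed

end
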